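(* Let $A$ be an $n\times n$ ASM and let $p=\sigma_-(A)$. Then there is a sequence of $n\times n$ ASMs $A^{(p)},A^{(p-1)},\ldots,A^{(0)}$ such that (i) $A^{(p)}=A$; (ii) $A^{(0)}$ is a permutation matrix; (iii) $\sigma_-(A^{(s)})=s$ for $s=0,1,\ldots,p$; and (iv) $h(A^{(p)})\preceq^* h(A^{(p-1)})\preceq^*\cdots\preceq^* h(A^{(0)})$.
   Context: An $n\times n$ alternating sign matrix (ASM) is an $n\times n$ matrix with entries in $\{0,1,-1\}$ such that in every row and column the nonzeros alternate in sign, beginning and ending with $+1$. $\sigma_-(B)$ denotes the number of entries equal to $-1$ in $B$. For an $n\times n$ matrix $B$, $h(B)=B^Tz_n$ where $z_n=(n,n-1,\ldots,1)^T$. For vectors $x,y\in\mathbb R^n$ (not necessarily sorted), $x\preceq^* y$ means $\sum_{j=1}^p x_j\le\sum_{j=1}^p y_j$ for all $p\le n$, with equality for $p=n$. *)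

theory Defs
  imports "HOL-Combinatorics.Permutations"
begin

text \<open>An n x n matrix is represented as a function nat => nat => int; only
entries with row and column index below n are meaningful (indices 0..n-1).\<close>

definition alt_sign_list :: "int list \<Rightarrow> bool" where
  "alt_sign_list xs \<longleftrightarrow>
     (let L = filter (\<lambda>x. x \<noteq> 0) xs in
        L \<noteq> [] \<and> hd L = 1 \<and> last L = 1 \<and>
        (\<forall>k. Suc k < length L \<longrightarrow> L ! Suc k = - (L ! k)))"

definition is_asm :: "nat \<Rightarrow> (nat \<Rightarrow> nat \<Rightarrow> int) \<Rightarrow> bool" where
  "is_asm n A \<longleftrightarrow>
     (\<forall>i<n. \<forall>j<n. A i j \<in> {0, 1, -1}) \<and>
     (\<forall>i<n. alt_sign_list (map (\<lambda>j. A i j) [0..<n])) \<and>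
     (\<forall>j<n. alt_sign_list (map (\<lambda>i. A i j) [0..<n]))"

definition sigma_minus :: "nat \<Rightarrow> (nat \<Rightarrow> nat \<Rightarrow> int) \<Rightarrow> nat" where
  "sigma_minus n A = card {(i, j). i < n \<and> j < n \<and> A i j = -1}"

definition is_perm_matrix :: "nat \<Rightarrow> (nat \<Rightarrow> nat \<Rightarrow> int) \<Rightarrow> bool" where
  "is_perm_matrix n A \<longleftrightarrow>
     (\<exists>\<sigma>. \<sigma> permutes {..<n} \<and> (\<forall>i<n. \<forall>j<n. A i j = (if \<sigma> i = j then 1 else 0)))"

text \<open>h(B) = B^T z_n with z_n = (n, n-1, ..., 1): with 0-based indices,
component j is sum over i<n of B i j * (n - i).\<close>
definition hvec :: "nat \<Rightarrow> (nat \<Rightarrow> nat \<Rightarrow> int) \<Rightarrow> nat \<Rightarrow> int" where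
  "hvec n B j = (\<Sum>i<n. B i j * int (n - i))"

text \<open>x \<preceq>* y for vectors of length n (0-based, unsorted): partial sums of
the first p entries of x are at most those of y, equality for p = n.\<close>
definition weak_maj :: "nat \<Rightarrow> (nat \<Rightarrow> int) \<Rightarrow> (nat \<Rightarrow> int) \<Rightarrow> bool" where
  "weak_maj n x y \<longleftrightarrow>
     (\<forall>p\<le>n. (\<Sum>j<p. x j) \<le> (\<Sum>j<p. y j)) \<and> (\<Sum>j<n. x j) = (\<Sum>j<n. y j)"

end

theory Submission
  imports Defs
begin

text \<open>Rows and columns of an ASM are exactly the 0/\<plusminus>1 sequences whose prefix sums stay
in {0, 1} and end at 1. Let (r, c) be the first -1 in row-major order. Everything before it is
nonnegative, so row r has a single 1 left of c, at c1, column c has a single 1 above r, at r1,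
and the entry at (r1, c1) is 0. Adding (e_r1 - e_r)(e_c1 - e_c)^T removes this -1 and keeps all
prefix sums in {0, 1}; it changes h by (r - r1)(e_c1 - e_c), which moves weight to an earlier
coordinate and so can only raise the partial sums of h. Repeating this sigma_minus A times ends in a
permutation matrix.\<close>

definition alternating :: "int list \<Rightarrow> bool" where
  "alternating L \<longleftrightarrow> (\<forall>k. Suc k < length L \<longrightarrow> L ! Suc k = - (L ! k))"

lemma alternating_Nil [simp]: "alternating []"
  by (simp add: alternating_def)

lemma alternating_Cons [simp]:
  "alternating (a # L) \<longleftrightarrow> (L \<noteq> [] \<longrightarrow> hd L = - a) \<and> alternating L"
  unfolding alternating_def
  by (cases L) (auto simp: less_Suc_eq_0_disj all_conj_distrib nth_Cons split: nat.splits)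

definition prefix_sums_01 :: "int \<Rightarrow> int list \<Rightarrow> bool" where
  "prefix_sums_01 s xs \<longleftrightarrow>
     (\<forall>k\<le>length xs. s + sum_list (take k xs) \<in> {0, 1}) \<and> s + sum_list xs = 1"

lemma prefix_sums_01_Nil [simp]: "prefix_sums_01 s [] \<longleftrightarrow> s = 1"
  by (auto simp: prefix_sums_01_def)

lemma prefix_sums_01_Cons [simp]:
  "prefix_sums_01 s (x # xs) \<longleftrightarrow> s \<in> {0, 1} \<and> prefix_sums_01 (s + x) xs"
proof -
  have "(\<forall>k\<le>Suc (length xs). P k) \<longleftrightarrow> P 0 \<and> (\<forall>k\<le>length xs. P (Suc k))" for P
    by (metis Suc_le_mono le0 not0_implies_Suc)
  then show ?thesis
    unfolding prefix_sums_01_def by (simp add: add.assoc)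
qed

lemma prefix_sums_01_start: "prefix_sums_01 s xs \<Longrightarrow> s \<in> {0, 1}"
  by (cases xs) auto

text \<open>The start value s is the running sum before xs; the case s = 1 (after an odd number of
nonzero entries) is what makes the induction go through.\<close>

lemma prefix_sums_01_iff_alternating:
  "set xs \<subseteq> {0, 1, -1} \<Longrightarrow>
     (prefix_sums_01 0 xs \<longleftrightarrow>
        filter (\<lambda>x. x \<noteq> 0) xs \<noteq> [] \<and> hd (filter (\<lambda>x. x \<noteq> 0) xs) = 1 \<and>
        last (filter (\<lambda>x. x \<noteq> 0) xs) = 1 \<and> alternating (filter (\<lambda>x. x \<noteq> 0) xs)) \<and>
     (prefix_sums_01 1 xs \<longleftrightarrow>
        filter (\<lambda>x. x \<noteq> 0) xs = [] \<or> hd (filter (\<lambda>x. x \<noteq> 0) xs) = -1 \<and>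
        last (filter (\<lambda>x. x \<noteq> 0) xs) = 1 \<and> alternating (filter (\<lambda>x. x \<noteq> 0) xs))"
proof (induction xs)
  case (Cons x xs)
  then consider "x = 0" | "x = 1" | "x = -1"
    by auto
  then show ?case
    using Cons prefix_sums_01_start[of 2 xs] prefix_sums_01_start[of "-1" xs]
    by cases auto
qed simp

lemma alt_sign_list_iff_prefix_sums_01:
  "set xs \<subseteq> {0, 1, -1} \<Longrightarrow> alt_sign_list xs \<longleftrightarrow> prefix_sums_01 0 xs"
  using prefix_sums_01_iff_alternating[of xs] by (simp add: alt_sign_list_def alternating_def Let_def)

definition prefix_sums_01_upto :: "nat \<Rightarrow> (nat \<Rightarrow> int) \<Rightarrow> bool" where
  "prefix_sums_01_upto n f \<longleftrightarrow> (\<forall>k\<le>n. sum f {..<k} \<in> {0, 1}) \<and> sum f {..<n} = 1"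

lemma prefix_sums_01_upto_values:
  assumes "prefix_sums_01_upto n f" and "j < n"
  shows "f j \<in> {0, 1, -1}"
proof -
  have "sum f {..<Suc j} \<in> {0, 1}" "sum f {..<j} \<in> {0, 1}"
    using assms by (auto simp: prefix_sums_01_upto_def simp del: sum.lessThan_Suc)
  then show ?thesis
    by auto
qed

lemma prefix_sum_before_minus_one:
  assumes "prefix_sums_01_upto n f" and "c < n" and "f c = -1"
  shows "sum f {..<c} = 1"
proof -
  have "sum f {..<Suc c} \<in> {0, 1}" "sum f {..<c} \<in> {0, 1}"
    using assms by (auto simp: prefix_sums_01_upto_def simp del: sum.lessThan_Suc)
  then show ?thesis
    using assms(3) by auto
qed

lemma alt_sign_list_map_iff:
  assumes "\<forall>j<n. f j \<in> {0, 1, -1}"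
  shows "alt_sign_list (map f [0..<n]) \<longleftrightarrow> prefix_sums_01_upto n f"
proof -
  have entries: "set (map f [0..<n]) \<subseteq> {0, 1, -1}"
    using assms by auto
  have sums: "sum_list (take k (map f [0..<n])) = sum f {..<k}" if "k \<le> n" for k
    using that by (simp add: take_map) (metis atLeast_upt sum_set_upt_conv_sum_list_nat)
  show ?thesis
    unfolding alt_sign_list_iff_prefix_sums_01[OF entries] prefix_sums_01_def prefix_sums_01_upto_def
    using sums[of n] by (simp add: sums)
qed

definition is_asm_by_sums :: "nat \<Rightarrow> (nat \<Rightarrow> nat \<Rightarrow> int) \<Rightarrow> bool" where
  "is_asm_by_sums n B \<longleftrightarrow>
     (\<forall>i<n. prefix_sums_01_upto n (\<lambda>j. B i j)) \<and> (\<forall>j<n. prefix_sums_01_upto n (\<lambda>i. B i j))"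

lemma is_asm_by_sums_values:
  "is_asm_by_sums n B \<Longrightarrow> i < n \<Longrightarrow> j < n \<Longrightarrow> B i j \<in> {0, 1, -1}"
  unfolding is_asm_by_sums_def using prefix_sums_01_upto_values by blast

lemma is_asm_iff_by_sums: "is_asm n B \<longleftrightarrow> is_asm_by_sums n B"
proof -
  have "is_asm n B \<longleftrightarrow> (\<forall>i<n. \<forall>j<n. B i j \<in> {0, 1, -1}) \<and> is_asm_by_sums n B"
    unfolding is_asm_def is_asm_by_sums_def
    using alt_sign_list_map_iff[of n "\<lambda>j. B _ j"] alt_sign_list_map_iff[of n "\<lambda>i. B i _"]
    by blast
  then show ?thesis
    using is_asm_by_sums_values by blast
qed

lemma sum_nonneg_eq_term_imp_zero:
  fixes f :: "'a \<Rightarrow> 'b::ordered_cancel_comm_monoid_add"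
  assumes "finite A" and "\<forall>x\<in>A. 0 \<le> f x" and "a \<in> A" and "sum f A = f a"
    and "b \<in> A" and "b \<noteq> a"
  shows "f b = 0"
proof -
  have "sum f (A - {a}) = 0"
    using assms sum.remove[of A a f] by (metis add.right_neutral add_left_cancel)
  then show ?thesis
    using assms sum_nonneg_eq_0_iff[of "A - {a}" f] by auto
qed

lemma ex1_one_if_sum_01_eq_one:
  fixes f :: "nat \<Rightarrow> int"
  assumes "\<forall>j<n. f j \<in> {0, 1}" and "(\<Sum>j<n. f j) = 1"
  shows "\<exists>!j. j < n \<and> f j = 1"
proof -
  obtain j where j: "j < n" "f j \<noteq> 0"
    using assms(2) by (metis lessThan_iff sum.neutral zero_neq_one)
  then have "f j = 1"
    using assms(1) by auto
  moreover have "f k = 0" if "k < n" "k \<noteq> j" for k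
    using sum_nonneg_eq_term_imp_zero[of "{..<n}" f j k] assms \<open>f j = 1\<close> j that by force
  ultimately show ?thesis
    using j by metis
qed

definition corner_move ::
    "(nat \<Rightarrow> nat \<Rightarrow> int) \<Rightarrow> nat \<Rightarrow> nat \<Rightarrow> nat \<Rightarrow> nat \<Rightarrow> nat \<Rightarrow> nat \<Rightarrow> int" where
  "corner_move B r1 c1 r c =
     (\<lambda>i j. B i j + (of_bool (i = r1) - of_bool (i = r)) * (of_bool (j = c1) - of_bool (j = c)))"

lemma corner_move_row_sum:
  "(\<Sum>j<k. corner_move B r1 c1 r c i j) =
     (\<Sum>j<k. B i j) + (of_bool (i = r1) - of_bool (i = r)) * (of_bool (c1 < k) - of_bool (c < k))"
  by (simp add: corner_move_def sum.distrib sum_subtractf flip: sum_distrib_left)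

lemma corner_move_col_sum:
  "(\<Sum>i<k. corner_move B r1 c1 r c i j) =
     (\<Sum>i<k. B i j) + (of_bool (r1 < k) - of_bool (r < k)) * (of_bool (j = c1) - of_bool (j = c))"
  by (simp add: corner_move_def sum.distrib sum_subtractf flip: sum_distrib_right)

lemma hvec_corner_move:
  assumes "r1 < n" and "r < n"
  shows "hvec n (corner_move B r1 c1 r c) j =
           hvec n B j + (of_bool (j = c1) - of_bool (j = c)) * (int r - int r1)"
proof -
  have "hvec n (corner_move B r1 c1 r c) j =
          hvec n B j + (of_bool (j = c1) - of_bool (j = c)) *
            (\<Sum>i<n. (of_bool (i = r1) - of_bool (i = r)) * int (n - i))"
    unfolding hvec_def corner_move_def sum_distrib_left sum.distrib[symmetric]
    by (rule sum.cong) (simp_all add: algebra_simps)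
  also have "(\<Sum>i<n. (of_bool (i = r1) - of_bool (i = r)) * int (n - i)) = int r - int r1"
    using assms by (simp add: left_diff_distrib sum_subtractf)
  finally show ?thesis .
qed

lemma weak_maj_hvec_corner_move:
  assumes "r1 \<le> r" and "r < n" and "c1 \<le> c" and "c < n"
  shows "weak_maj n (hvec n B) (hvec n (corner_move B r1 c1 r c))"
proof -
  have gain: "(\<Sum>j<p. hvec n (corner_move B r1 c1 r c) j) =
                (\<Sum>j<p. hvec n B j) + (of_bool (c1 < p) - of_bool (c < p)) * (int r - int r1)" for p
    using assms
    by (simp add: hvec_corner_move sum.distrib sum_subtractf flip: sum_distrib_right)
  have "0 \<le> (of_bool (c1 < p) - of_bool (c < p)) * (int r - int r1 :: int)" for p
    using assms by auto
  then show ?thesis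
    unfolding weak_maj_def gain using assms by auto
qed

text \<open>For an ASM the two nonnegativity assumptions say that (r, c) is the first -1 in
row-major order.\<close>

locale asm_first_minus_one =
  fixes n :: nat and B :: "nat \<Rightarrow> nat \<Rightarrow> int" and r c :: nat
  assumes asm: "is_asm_by_sums n B"
    and r_less: "r < n" and c_less: "c < n" and minus_one: "B r c = -1"
    and nonneg_above: "\<And>i j. i < r \<Longrightarrow> j < n \<Longrightarrow> 0 \<le> B i j"
    and nonneg_left: "\<And>j. j < c \<Longrightarrow> 0 \<le> B r j"
begin

lemma row_prefix: "prefix_sums_01_upto n (\<lambda>j. B i j)" if "i < n"
  using asm that by (simp add: is_asm_by_sums_def)

lemma col_prefix: "prefix_sums_01_upto n (\<lambda>i. B i j)" if "j < n"
  using asm that by (simp add: is_asm_by_sums_def)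

lemma sum_left_of_minus_one: "(\<Sum>j<c. B r j) = 1"
  using prefix_sum_before_minus_one[OF row_prefix] r_less c_less minus_one by blast

lemma sum_above_minus_one: "(\<Sum>i<r. B i c) = 1"
  using prefix_sum_before_minus_one[OF col_prefix] r_less c_less minus_one by blast

lemma exists_corners: "\<exists>r1<r. \<exists>c1<c. B r1 c = 1 \<and> B r c1 = 1"
proof -
  obtain r1 where "r1 < r" "B r1 c \<noteq> 0"
    using sum_above_minus_one by (metis lessThan_iff sum.neutral zero_neq_one)
  moreover obtain c1 where "c1 < c" "B r c1 \<noteq> 0"
    using sum_left_of_minus_one by (metis lessThan_iff sum.neutral zero_neq_one)
  ultimately show ?thesis
    using nonneg_above nonneg_left r_less c_less
      is_asm_by_sums_values[OF asm, of r1 c] is_asm_by_sums_values[OF asm, of r c1]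
    by (smt (verit) empty_iff insert_iff order.strict_trans)
qed

end

locale asm_corner = asm_first_minus_one +
  fixes r1 c1 :: nat
  assumes r1_less: "r1 < r" and one_above: "B r1 c = 1"
    and c1_less: "c1 < c" and one_left: "B r c1 = 1"
begin

lemma row_r_left: "B r j = of_bool (j = c1)" if "j < c"
proof (cases "j = c1")
  case False
  then show ?thesis
    using sum_nonneg_eq_term_imp_zero[of "{..<c}" "\<lambda>j. B r j" c1 j]
      sum_left_of_minus_one one_left nonneg_left c1_less that by simp
qed (simp add: one_left)

lemma col_c_above: "B i c = of_bool (i = r1)" if "i < r"
proof (cases "i = r1")
  case False
  then show ?thesis
    using sum_nonneg_eq_term_imp_zero[of "{..<r}" "\<lambda>i. B i c" r1 i]
      sum_above_minus_one one_above nonneg_above c_less r1_less that by simp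
qed (simp add: one_above)

lemma row_r1: "B r1 j = of_bool (j = c)" if "j < n"
proof (cases "j = c")
  case False
  have "(\<Sum>j<n. B r1 j) = 1"
    using row_prefix r1_less r_less by (simp add: prefix_sums_01_upto_def)
  then show ?thesis
    using False sum_nonneg_eq_term_imp_zero[of "{..<n}" "\<lambda>j. B r1 j" c j]
      one_above nonneg_above r1_less c_less that by simp
qed (simp add: one_above)

lemma col_c1_above: "B i c1 = 0" if "i < r"
proof -
  have "(\<Sum>i<Suc r. B i c1) \<in> {0, 1}"
    using col_prefix[of c1] c1_less c_less r_less
    by (simp add: prefix_sums_01_upto_def del: sum.lessThan_Suc)
  then have "(\<Sum>i<r. B i c1) = 0"
    using one_left sum_nonneg[of "{..<r}" "\<lambda>i. B i c1"] nonneg_above c1_less c_less by auto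
  then show ?thesis
    using sum_nonneg_eq_0_iff[of "{..<r}" "\<lambda>i. B i c1"] nonneg_above c1_less c_less that by auto
qed

lemma corner_move_row_prefix:
  assumes "i < n"
  shows "prefix_sums_01_upto n (\<lambda>j. corner_move B r1 c1 r c i j)"
proof -
  have "(\<Sum>j<k. corner_move B r1 c1 r c i j) \<in> {0, 1}" if "k \<le> n" for k
  proof -
    consider "i = r1" | "i = r" "k \<le> c" | "i = r" "c < k" | "i \<noteq> r1" "i \<noteq> r"
      by linarith
    then show ?thesis
    proof cases
      case 1
      have "(\<Sum>j<k. B r1 j) = (\<Sum>j<k. of_bool (j = c))"
        using row_r1 that by (intro sum.cong) auto
      then show ?thesis
        using 1 r1_less c1_less by (simp add: corner_move_row_sum)
    next
      case 2
      have "(\<Sum>j<k. B r j) = (\<Sum>j<k. of_bool (j = c1))"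
        using row_r_left 2 by (intro sum.cong) auto
      then show ?thesis
        using 2 r1_less by (simp add: corner_move_row_sum)
    next
      case 3
      then show ?thesis
        using row_prefix[of r] r_less r1_less c1_less that
        by (simp add: corner_move_row_sum prefix_sums_01_upto_def)
    next
      case 4
      then show ?thesis
        using row_prefix[OF assms] that by (simp add: corner_move_row_sum prefix_sums_01_upto_def)
    qed
  qed
  moreover have "(\<Sum>j<n. corner_move B r1 c1 r c i j) = 1"
    using row_prefix[OF assms] c_less c1_less
    by (simp add: corner_move_row_sum prefix_sums_01_upto_def)
  ultimately show ?thesis
    by (simp add: prefix_sums_01_upto_def)
qed

lemma corner_move_col_prefix:
  assumes "j < n"
  shows "prefix_sums_01_upto n (\<lambda>i. corner_move B r1 c1 r c i j)"
proof -
  have "(\<Sum>i<k. corner_move B r1 c1 r c i j) \<in> {0, 1}" if "k \<le> n" for k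
  proof -
    consider "j = c1" "k \<le> r" | "j = c" "k \<le> r" | "j = c1 \<or> j = c" "r < k" | "j \<noteq> c1" "j \<noteq> c"
      by linarith
    then show ?thesis
    proof cases
      case 1
      have "(\<Sum>i<k. B i c1) = 0"
        using col_c1_above 1 by (intro sum.neutral) auto
      then show ?thesis
        using 1 c1_less by (simp add: corner_move_col_sum)
    next
      case 2
      have "(\<Sum>i<k. B i c) = (\<Sum>i<k. of_bool (i = r1))"
        using col_c_above 2 by (intro sum.cong) auto
      then show ?thesis
        using 2 c1_less by (simp add: corner_move_col_sum)
    next
      case 3
      then show ?thesis
        using col_prefix[OF assms] r1_less c1_less that
        by (auto simp: corner_move_col_sum prefix_sums_01_upto_def)
    next
      case 4
      then show ?thesis
        using col_prefix[OF assms] that by (simp add: corner_move_col_sum prefix_sums_01_upto_def)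
    qed
  qed
  moreover have "(\<Sum>i<n. corner_move B r1 c1 r c i j) = 1"
    using col_prefix[OF assms] r_less r1_less
    by (simp add: corner_move_col_sum prefix_sums_01_upto_def)
  ultimately show ?thesis
    by (simp add: prefix_sums_01_upto_def)
qed

lemma is_asm_by_sums_corner_move: "is_asm_by_sums n (corner_move B r1 c1 r c)"
  using corner_move_row_prefix corner_move_col_prefix by (simp add: is_asm_by_sums_def)

lemma sigma_minus_corner_move: "sigma_minus n (corner_move B r1 c1 r c) = sigma_minus n B - 1"
proof -
  have "B r1 c1 = 0"
    using col_c1_above r1_less .
  then have "{(i, j). i < n \<and> j < n \<and> corner_move B r1 c1 r c i j = -1} =
               {(i, j). i < n \<and> j < n \<and> B i j = -1} - {(r, c)}"
    using one_above one_left minus_one r1_less c1_less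
    by (auto simp: corner_move_def of_bool_def split: if_splits)
  moreover have "finite {(i, j). i < n \<and> j < n \<and> B i j = -1}"
    by (rule finite_subset[of _ "{..<n} \<times> {..<n}"]) auto
  ultimately show ?thesis
    using r_less c_less minus_one by (simp add: sigma_minus_def)
qed

end

lemma asm_first_minus_one_exists:
  assumes asm: "is_asm_by_sums n B" and "0 < sigma_minus n B"
  shows "\<exists>r c. asm_first_minus_one n B r c"
proof -
  have "{(i, j). i < n \<and> j < n \<and> B i j = -1} \<noteq> {}"
    using assms(2) card.empty unfolding sigma_minus_def by (metis less_irrefl)
  then have "\<exists>i. i < n \<and> (\<exists>j<n. B i j = -1)"
    by auto
  then obtain r where r: "r < n" "\<exists>j<n. B r j = -1"
    and above: "\<forall>i<r. \<not> (i < n \<and> (\<exists>j<n. B i j = -1))"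
    unfolding exists_least_iff[of "\<lambda>i. i < n \<and> (\<exists>j<n. B i j = -1)"] by blast
  then obtain c where c: "c < n" "B r c = -1" and left: "\<forall>j<c. \<not> (j < n \<and> B r j = -1)"
    unfolding exists_least_iff[of "\<lambda>j. j < n \<and> B r j = -1"] by blast
  have "0 \<le> B i j" if "i < n" "j < n" "B i j \<noteq> -1" for i j
    using is_asm_by_sums_values[OF asm that(1,2)] that(3) by auto
  then have "asm_first_minus_one n B r c"
    using asm r c above left by unfold_locales auto
  then show ?thesis
    by blast
qed

lemma asm_reduce_minus_ones:
  assumes "is_asm_by_sums n B" and "0 < sigma_minus n B"
  shows "\<exists>M. is_asm_by_sums n M \<and> sigma_minus n M = sigma_minus n B - 1 \<and>
             weak_maj n (hvec n B) (hvec n M)"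
proof -
  obtain r c where "asm_first_minus_one n B r c"
    using asm_first_minus_one_exists[OF assms] by blast
  then interpret asm_first_minus_one n B r c .
  obtain r1 c1 where "r1 < r" "B r1 c = 1" "c1 < c" "B r c1 = 1"
    using exists_corners by blast
  then interpret asm_corner n B r c r1 c1
    by unfold_locales
  show ?thesis
    using is_asm_by_sums_corner_move sigma_minus_corner_move
      weak_maj_hvec_corner_move[of r1 r n c1 c B] r1_less r_less c1_less c_less
    by (intro exI[of _ "corner_move B r1 c1 r c"]) simp
qed

lemma is_perm_matrix_if_sigma_minus_zero:
  assumes asm: "is_asm_by_sums n B" and "sigma_minus n B = 0"
  shows "is_perm_matrix n B"
proof -
  have "finite {(i, j). i < n \<and> j < n \<and> B i j = -1}"
    by (rule finite_subset[of _ "{..<n} \<times> {..<n}"]) auto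
  then have "\<forall>i<n. \<forall>j<n. B i j \<noteq> -1"
    using assms(2) by (auto simp: sigma_minus_def)
  then have entries: "\<forall>i<n. \<forall>j<n. B i j \<in> {0, 1}"
    using is_asm_by_sums_values[OF asm] by blast
  have row: "\<exists>!j. j < n \<and> B i j = 1" if "i < n" for i
    using ex1_one_if_sum_01_eq_one[of n "\<lambda>j. B i j"] entries asm that
    by (simp add: is_asm_by_sums_def prefix_sums_01_upto_def)
  have col: "\<exists>!i. i < n \<and> B i j = 1" if "j < n" for j
    using ex1_one_if_sum_01_eq_one[of n "\<lambda>i. B i j"] entries asm that
    by (simp add: is_asm_by_sums_def prefix_sums_01_upto_def)
  define \<sigma> where "\<sigma> i = (if i < n then THE j. j < n \<and> B i j = 1 else i)" for i
  have \<sigma>: "\<sigma> i < n \<and> B i (\<sigma> i) = 1" if "i < n" for i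
    using theI'[OF row[OF that]] that by (simp add: \<sigma>_def)
  have "inj_on \<sigma> {..<n}"
    using \<sigma> col by (metis inj_onI lessThan_iff)
  moreover have "\<sigma> i = i" if "i \<notin> {..<n}" for i
    using that by (simp add: \<sigma>_def)
  ultimately have "\<sigma> permutes {..<n}"
    using \<sigma> by (intro inj_imp_permutes) auto
  moreover have "B i j = (if \<sigma> i = j then 1 else 0)" if "i < n" "j < n" for i j
    using \<sigma>[OF that(1)] row[OF that(1)] entries that by auto
  ultimately show ?thesis
    unfolding is_perm_matrix_def by blast
qed

lemma asm_chain_to_perm_matrix:
  assumes "is_asm_by_sums n A"
  shows "\<exists>S. S (sigma_minus n A) = A \<and>
             (\<forall>s\<le>sigma_minus n A. is_asm_by_sums n (S s) \<and> sigma_minus n (S s) = s) \<and>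
             (\<forall>s<sigma_minus n A. weak_maj n (hvec n (S (Suc s))) (hvec n (S s)))"
  using assms
proof (induction "sigma_minus n A" arbitrary: A)
  case 0
  then show ?case
    by (intro exI[of _ "\<lambda>_. A"]) simp
next
  case (Suc p)
  obtain M where M: "is_asm_by_sums n M" "sigma_minus n M = p"
    and maj: "weak_maj n (hvec n A) (hvec n M)"
    using asm_reduce_minus_ones[OF Suc.prems] Suc.hyps(2) by (metis diff_Suc_1 zero_less_Suc)
  then obtain S where "S p = M" "\<forall>s\<le>p. is_asm_by_sums n (S s) \<and> sigma_minus n (S s) = s"
    "\<forall>s<p. weak_maj n (hvec n (S (Suc s))) (hvec n (S s))"
    using Suc.hyps(1) by metis
  moreover have "sigma_minus n A = Suc p"
    using Suc.hyps(2) by simp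
  ultimately show ?case
    using Suc.prems maj
    by (intro exI[of _ "S(Suc p := A)"]) (auto simp: le_Suc_eq less_Suc_eq)
qed

theorem mainTheorem9:
  fixes n :: nat and A :: "nat \<Rightarrow> nat \<Rightarrow> int"
  assumes "is_asm n A"
  defines "p \<equiv> sigma_minus n A"
  shows "\<exists>S :: nat \<Rightarrow> nat \<Rightarrow> nat \<Rightarrow> int.
           (\<forall>s\<le>p. is_asm n (S s)) \<and>
           (\<forall>i<n. \<forall>j<n. S p i j = A i j) \<and>
           is_perm_matrix n (S 0) \<and>
           (\<forall>s\<le>p. sigma_minus n (S s) = s) \<and>
           (\<forall>s<p. weak_maj n (hvec n (S (Suc s))) (hvec n (S s)))"
proof -
  obtain S where "S p = A" and chain: "\<forall>s\<le>p. is_asm_by_sums n (S s) \<and> sigma_minus n (S s) = s"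
    and "\<forall>s<p. weak_maj n (hvec n (S (Suc s))) (hvec n (S s))"
    using asm_chain_to_perm_matrix assms unfolding is_asm_iff_by_sums by blast
  moreover have "is_perm_matrix n (S 0)"
    using chain is_perm_matrix_if_sigma_minus_zero by blast
  ultimately show ?thesis
    by (intro exI[of _ S]) (simp add: is_asm_iff_by_sums)
qed

end
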